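(* Let $q$ be a prime power and let $\mathcal{C}$ be an $[n,k]_q$ MWS code. (1) If $\mathcal{C}$ satisfies property (A), then there exists an $[N,k+1]_q$ MWS code with $N=2n+1$. (2) Let $q\ge 3$. If $\mathcal{C}$ satisfies both property (A) and property (B), then there exists an $[N,k+1]_q$ MWS code which satisfies property (B), where $N=(q-1)n+(q-2)+(T+1)\frac{(q-2)(q-3)}{2}$ and $T=\max\{c[\beta]: c\in\mathcal{C}\setminus\{0\},\ \beta\in\mathbb{F}_q^*\}$.
   Context: Fix a primitive element $\alpha$ of $\mathbb{F}_q$. An $[n,k]_q$ code is a $k$-dimensional subspace of $\mathbb{F}_q^n$ with Hamming weight $w(c)=|\{i:c_i\ne 0\}|$; codes of dimension $\ge 2$ are assumed non-degenerate (no coordinate identically zero on the code). $w(\mathcal{C})=\{w(c):c\in\mathcal{C}\setminus\{0\}\}$ and $\mathcal{C}$ is MWS if $|w(\mathcal{C})|=\frac{q^k-1}{q-1}$. For $c\in\mathbb{F}_q^n$ and $\beta\in\mathbb{F}_q$, $c[\beta]=|\{i: c_i=\beta\}|$, and the entries distribution vector is $V(c)=(c[\alpha],c[\alpha^2],\dots,c[\alpha^{q-1}],c[0])\in\mathbb{N}^q$. Property (A): there exists $\beta\in\mathbb{F}_q^*$ such that for $a,b\in\mathcal{C}$, $a[\beta]=b[\beta]$ only if $a=b$. Property (B): for every $c\in\mathcal{C}\setminus\{0\}$, the $q$ entries of $V(c)$ are pairwise distinct. *)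

theory Defs
  imports Complex_Main "HOL-Library.Function_Algebras" "HOL-Library.Cardinality"
begin

text \<open>Vectors of F_q^n are represented as functions nat => 'a that vanish at all
  indices >= n. The finite field F_q is a type 'a of class finite and field;
  q = CARD('a) is then automatically a prime power.\<close>

definition vsc :: "'a::field \<Rightarrow> (nat \<Rightarrow> 'a) \<Rightarrow> (nat \<Rightarrow> 'a)" where
  "vsc a c = (\<lambda>i. a * c i)"

definition vecs :: "nat \<Rightarrow> (nat \<Rightarrow> 'a::zero) set" where
  "vecs n = {c. \<forall>i\<ge>n. c i = 0}"

definition lin_code :: "nat \<Rightarrow> nat \<Rightarrow> (nat \<Rightarrow> 'a::{finite,field}) set \<Rightarrow> bool" where
  "lin_code n k C \<longleftrightarrow> C \<subseteq> vecs n \<and> module.subspace vsc C \<and> vector_space.dim vsc C = k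
     \<and> (k \<ge> 2 \<longrightarrow> (\<forall>i<n. \<exists>c\<in>C. c i \<noteq> 0))"

definition hw :: "nat \<Rightarrow> (nat \<Rightarrow> 'a::zero) \<Rightarrow> nat" where
  "hw n c = card {i\<in>{..<n}. c i \<noteq> 0}"

definition cnt :: "nat \<Rightarrow> (nat \<Rightarrow> 'a) \<Rightarrow> 'a \<Rightarrow> nat" where
  "cnt n c b = card {i\<in>{..<n}. c i = b}"

definition MWS :: "nat \<Rightarrow> nat \<Rightarrow> (nat \<Rightarrow> 'a::{finite,field}) set \<Rightarrow> bool" where
  "MWS n k C \<longleftrightarrow> card (hw n ` (C - {0})) = (CARD('a) ^ k - 1) div (CARD('a) - 1)"

definition propA :: "nat \<Rightarrow> (nat \<Rightarrow> 'a::{finite,field}) set \<Rightarrow> bool" where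
  "propA n C \<longleftrightarrow> (\<exists>b. b \<noteq> 0 \<and> (\<forall>x\<in>C. \<forall>y\<in>C. cnt n x b = cnt n y b \<longrightarrow> x = y))"

text \<open>The entries of V(c) are c[beta] for beta ranging over all of F_q
  (alpha, ..., alpha^(q-1), 0 enumerate F_q), so pairwise distinctness is
  injectivity of beta |-> c[beta].\<close>
definition propB :: "nat \<Rightarrow> (nat \<Rightarrow> 'a::{finite,field}) set \<Rightarrow> bool" where
  "propB n C \<longleftrightarrow> (\<forall>c\<in>C - {0}. inj (cnt n c))"

definition maxT :: "nat \<Rightarrow> (nat \<Rightarrow> 'a::{finite,field}) set \<Rightarrow> nat" where
  "maxT n C = Max {cnt n c b | c b. c \<in> C - {0} \<and> b \<noteq> 0}"

end

theory Submission
  imports Defs "HOL-Library.Multiset" "HOL-Library.FuncSet"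
begin

text \<open>Let b witness property (A) for C and adjoin to C the vector
  u = (-b, ..., -b, g_n, ..., g_(N-1)) whose tail g has no zero entry.
  A codeword c + l u with l \<noteq> 0 has weight N - c[l b] = N - (l^-1 c)[b], so by
  property (A) these q^k new weights are pairwise distinct, and for N > 2n they
  all exceed the weights of C; the number of weights thus grows by q^k, which is
  exactly what MWS demands in dimension k+1. Part (1) takes g = 1 and N = 2n+1.
  For part (2) the tail contains each y \<notin> {0, -b} exactly n + 1 + j(y)(T+1) times,
  where j enumerates these q-2 values. Then in c + l u the counts of the values
  x \<notin> {0, -l b} lie in pairwise disjoint blocks of length T+1 above n, while the
  two remaining counts are c[l b] and c[0], which differ by property (B) of C.\<close>

interpretation V: vector_space "vsc :: 'a::field \<Rightarrow> (nat \<Rightarrow> 'a) \<Rightarrow> nat \<Rightarrow> 'a"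
  by unfold_locales (auto simp: vsc_def fun_eq_iff algebra_simps)

lemma vsc_apply: "vsc a c i = a * c i"
  by (simp add: vsc_def)

lemma subspace_vecs: "V.subspace (vecs n)"
  unfolding V.subspace_def vecs_def by (auto simp: vsc_apply)

lemma finite_vecs: "finite (vecs n :: (nat \<Rightarrow> 'a::{finite,zero}) set)"
proof -
  have "inj_on (\<lambda>f. restrict f {..<n}) (vecs n :: (nat \<Rightarrow> 'a) set)"
    unfolding vecs_def inj_on_def restrict_def fun_eq_iff
    by (metis (mono_tags, lifting) lessThan_iff mem_Collect_eq not_le)
  moreover have "(\<lambda>f. restrict f {..<n}) ` (vecs n :: (nat \<Rightarrow> 'a) set) \<subseteq> {..<n} \<rightarrow>\<^sub>E UNIV"
    by (rule image_subsetI) simp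
  moreover have "finite ({..<n} \<rightarrow>\<^sub>E (UNIV :: 'a set))"
    by (rule finite_PiE) auto
  ultimately show ?thesis
    by (metis finite_imageD finite_subset)
qed

lemma card_span_insert:
  fixes S :: "(nat \<Rightarrow> 'a::{finite,field}) set"
  assumes "u \<notin> V.span S"
  shows "card (V.span (insert u S)) = card (V.span S) * CARD('a)"
proof -
  let ?f = "\<lambda>(x, l). x + vsc l u"
  have "V.span (insert u S) = ?f ` (V.span S \<times> UNIV)"
  proof (intro set_eqI iffI)
    fix x assume "x \<in> V.span (insert u S)"
    then obtain l where "x - vsc l u \<in> V.span S"
      using V.span_insert by blast
    then show "x \<in> ?f ` (V.span S \<times> UNIV)"
      by (intro image_eqI[where x = "(x - vsc l u, l)"]) auto
  qed (auto intro: V.span_add V.span_scale V.span_base V.span_mono[THEN subsetD, rotated])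
  moreover have "inj_on ?f (V.span S \<times> UNIV)"
  proof (rule inj_onI, clarsimp)
    fix x x' l l'
    assume x: "x \<in> V.span S" "x' \<in> V.span S" and eq: "x + vsc l u = x' + vsc l' u"
    have "l = l'"
    proof (rule ccontr)
      assume "l \<noteq> l'"
      have "vsc (l - l') u = x' - x"
        using eq by (simp add: fun_eq_iff algebra_simps vsc_apply)
      moreover have "u = vsc (inverse (l - l')) (vsc (l - l') u)"
        using \<open>l \<noteq> l'\<close> by (simp add: fun_eq_iff vsc_apply)
      ultimately have "u = vsc (inverse (l - l')) (x' - x)"
        by simp
      then have "u \<in> V.span S"
        using x by (simp add: V.span_scale V.span_diff)
      then show False using assms by simp
    qed
    then show "x = x' \<and> l = l'" using eq by simp
  qed
  ultimately show ?thesis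
    by (simp add: card_image card_cartesian_product)
qed

lemma card_span_independent:
  fixes B :: "(nat \<Rightarrow> 'a::{finite,field}) set"
  assumes "finite (V.span B)" "V.independent B"
  shows "card (V.span B) = CARD('a) ^ card B"
proof -
  have "finite B" using assms(1) V.span_superset finite_subset by blast
  then show ?thesis
    using assms
  proof (induction B rule: finite_induct)
    case (insert u B)
    have "V.independent B" "u \<notin> V.span B"
      using insert by (auto simp: V.independent_insert)
    moreover have "finite (V.span B)"
      using insert.prems(1) V.span_mono[of B "insert u B"] finite_subset by blast
    ultimately have "card (V.span (insert u B)) = card (V.span B) * CARD('a)"
      and "card (V.span B) = CARD('a) ^ card B"
      using insert.IH card_span_insert[of u B] by auto
    with insert.hyps show ?case
      by (simp add: mult.commute)
  qed simp
qed

lemma lin_code_card: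
  fixes C :: "(nat \<Rightarrow> 'a::{finite,field}) set"
  assumes "lin_code n k C"
  shows "finite C" "card C = CARD('a) ^ k"
proof -
  have C: "C \<subseteq> vecs n" "V.subspace C" "V.dim C = k"
    using assms by (auto simp: lin_code_def)
  show "finite C" using C(1) finite_vecs finite_subset by blast
  obtain B where B: "B \<subseteq> C" "V.independent B" "C \<subseteq> V.span B" "card B = V.dim C"
    using V.basis_exists by blast
  have "V.span B = C"
    using B V.span_minimal[OF B(1) C(2)] by blast
  with \<open>finite C\<close> show "card C = CARD('a) ^ k"
    using card_span_independent[of B] B C by simp
qed

lemma two_le_CARD_field: "2 \<le> CARD('a::{finite,field})"
  using card_mono[of UNIV "{0, 1 :: 'a}"] by simp

lemma lin_code_length_pos:
  fixes C :: "(nat \<Rightarrow> 'a::{finite,field}) set"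
  assumes "lin_code n k C" "1 \<le> k"
  shows "1 \<le> n"
proof (rule ccontr)
  assume "\<not> 1 \<le> n"
  then have "C \<subseteq> {0}"
    using assms(1) by (auto simp: lin_code_def vecs_def fun_eq_iff)
  then have "card C \<le> 1"
    using card_mono[of "{0}" C] by simp
  moreover have "CARD('a) \<le> CARD('a) ^ k"
    using assms(2) by (intro self_le_power) auto
  ultimately show False
    using lin_code_card(2)[OF assms(1)] two_le_CARD_field[where 'a = 'a] by simp
qed

lemma geometric_div_add_power:
  assumes "(2::nat) \<le> q"
  shows "(q ^ k - 1) div (q - 1) + q ^ k = (q ^ Suc k - 1) div (q - 1)"
proof -
  have "q ^ Suc k - 1 = (q ^ k - 1) + q ^ k * (q - 1)"
    using assms by (simp add: algebra_simps)
  moreover have "((q ^ k - 1) + q ^ k * (q - 1)) div (q - 1) = q ^ k + (q ^ k - 1) div (q - 1)"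
    using assms by (intro div_mult_self1) simp
  ultimately show ?thesis by simp
qed

lemma cnt_le: "cnt n c x \<le> n"
  unfolding cnt_def using card_mono[of "{..<n}" "{i\<in>{..<n}. c i = x}"] by auto

lemma hw_eq_diff_cnt_zero: "hw n c = n - cnt n c 0"
proof -
  have "{i\<in>{..<n}. c i \<noteq> 0} = {..<n} - {i\<in>{..<n}. c i = 0}" by auto
  moreover have "card ({..<n} - {i\<in>{..<n}. c i = 0}) = n - card {i\<in>{..<n}. c i = 0}"
    by (subst card_Diff_subset) auto
  ultimately show ?thesis
    unfolding hw_def cnt_def by simp
qed

lemma cnt_split:
  assumes "n \<le> N"
  shows "cnt N v x = cnt n v x + card {i\<in>{n..<N}. v i = x}"
proof -
  have "{i\<in>{..<N}. v i = x} = {i\<in>{..<n}. v i = x} \<union> {i\<in>{n..<N}. v i = x}"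
    using assms by auto
  moreover have "card ({i\<in>{..<n}. v i = x} \<union> {i\<in>{n..<N}. v i = x})
      = card {i\<in>{..<n}. v i = x} + card {i\<in>{n..<N}. v i = x}"
    by (rule card_Un_disjoint) auto
  ultimately show ?thesis
    unfolding cnt_def by simp
qed

lemma cnt_zero_vec: "cnt n 0 x = (if x = 0 then n else 0)"
  unfolding cnt_def by auto

lemma inj_add_at_zero:
  fixes f :: "'a::zero \<Rightarrow> nat"
  assumes "inj f" "\<And>x. f x < m"
  shows "inj (\<lambda>x. f x + (if x = 0 then m else 0))"
proof (rule injI)
  fix x y assume eq: "f x + (if x = 0 then m else 0) = f y + (if y = 0 then m else 0)"
  then have "f x = f y"
    using assms(2)[of x] assms(2)[of y] by (auto split: if_splits)
  then show "x = y" using assms(1) by (simp add: inj_eq)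
qed

text \<open>The bound f z \<le> T for z \<noteq> 0 keeps f (y + b) inside the block of y; the two
  exceptional values y = 0 and y = -b are told apart by f b \<noteq> f 0.\<close>

lemma inj_shifted_plus_blocks:
  fixes f j :: "'a::ab_group_add \<Rightarrow> nat"
  assumes "b \<noteq> 0" "\<And>z. f z \<le> n" "\<And>z. z \<noteq> 0 \<Longrightarrow> f z \<le> T" "f b \<noteq> f 0"
    and "inj_on j (UNIV - {0, - b})"
  shows "inj (\<lambda>y. f (y + b) + (if y = 0 \<or> y = - b then 0 else n + 1 + j y * (T + 1)))"
    (is "inj ?F")
proof (rule injI)
  fix y y' assume eq: "?F y = ?F y'"
  have small: "?F z \<le> n" if "z = 0 \<or> z = - b" for z
    using that assms(2)[of "z + b"] by auto
  have large: "n < ?F z" if "\<not> (z = 0 \<or> z = - b)" for z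
    using that by simp
  have block: "(?F z - (n + 1)) div (T + 1) = j z" if "\<not> (z = 0 \<or> z = - b)" for z
  proof -
    have "f (z + b) < T + 1"
      using assms(3)[of "z + b"] that by (simp add: add_eq_0_iff2)
    moreover have "?F z - (n + 1) = f (z + b) + j z * (T + 1)"
      using that by simp
    ultimately show ?thesis
      using div_mult_self1[of "T + 1" "f (z + b)" "j z"] by simp
  qed
  consider "y = 0 \<or> y = - b" "y' = 0 \<or> y' = - b"
    | "\<not> (y = 0 \<or> y = - b)" "\<not> (y' = 0 \<or> y' = - b)"
    | "(y = 0 \<or> y = - b) \<noteq> (y' = 0 \<or> y' = - b)"
    by blast
  then show "y = y'"
  proof cases
    case 1
    then have "f (y + b) = f (y' + b)"
      using eq by simp
    with 1 assms(1,4) show ?thesis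
      by (elim disjE) auto
  next
    case 2
    then have "j y = j y'"
      using eq block[of y] block[of y'] by metis
    then show ?thesis
      using 2 assms(5) by (auto dest: inj_onD)
  next
    case 3
    then have "?F y \<le> n \<and> n < ?F y' \<or> n < ?F y \<and> ?F y' \<le> n"
      using small large by blast
    then show ?thesis
      using eq by linarith
  qed
qed

lemma exists_tail_with_counts:
  fixes G :: "'a::finite \<Rightarrow> nat"
  shows "\<exists>g :: nat \<Rightarrow> 'a. \<forall>y. card {i\<in>{n..<n + sum G UNIV}. g i = y} = G y"
proof -
  obtain xs where xs: "mset xs = Abs_multiset G"
    using ex_mset by blast
  have count: "count_list xs y = G y" for y
    using xs count_mset by (metis count_Abs_multiset finite)
  define g where "g i = xs ! (i - n)" for i
  have "card {i\<in>{n..<n + length xs}. g i = y} = G y" for y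
  proof -
    have "{i\<in>{n..<n + length xs}. g i = y} = (\<lambda>i. i + n) ` {i. i < length xs \<and> xs ! i = y}"
    proof (intro set_eqI iffI)
      fix i assume "i \<in> {i\<in>{n..<n + length xs}. g i = y}"
      then show "i \<in> (\<lambda>i. i + n) ` {i. i < length xs \<and> xs ! i = y}"
        by (intro image_eqI[where x = "i - n"]) (auto simp: g_def)
    qed (auto simp: g_def)
    then have "card {i\<in>{n..<n + length xs}. g i = y} = card {i. i < length xs \<and> xs ! i = y}"
      by (simp add: card_image)
    also have "\<dots> = G y"
      using count[of y] by (simp add: count_list_eq_length_filter length_filter_conv_card eq_commute)
    finally show ?thesis .
  qed
  moreover have "length xs = sum G UNIV"
    using sum_count_set[of xs UNIV] count by simp
  ultimately show ?thesis by auto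
qed

lemma exists_block_tail:
  fixes b :: "'a::{finite,ab_group_add}" and n T :: nat
  assumes "b \<noteq> 0"
    and N: "N = n + (CARD('a) - 2) * (n + 1) + (T + 1) * ((CARD('a) - 2) * (CARD('a) - 3) div 2)"
  obtains g :: "nat \<Rightarrow> 'a" and j :: "'a \<Rightarrow> nat"
  where "inj_on j (UNIV - {0, - b})"
    and "\<And>y. card {i\<in>{n..<N}. g i = y} = (if y = 0 \<or> y = - b then 0 else n + 1 + j y * (T + 1))"
proof -
  define R where "R = UNIV - {0, - b}"
  define p where "p = CARD('a) - 2"
  have "card R = p"
    unfolding R_def p_def using assms(1) by (simp add: card_Diff_subset)
  then obtain j where j: "bij_betw j R {0..<p}"
    by (metis ex_bij_betw_finite_nat finite)
  define G where "G y = (if y = 0 \<or> y = - b then 0 else n + 1 + j y * (T + 1))" for y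
  have "sum G UNIV = sum G R + sum G {0, - b}"
    unfolding R_def by (rule sum.subset_diff) auto
  also have "sum G {0, - b} = 0"
    unfolding G_def by simp
  also have "sum G R = (\<Sum>y\<in>R. n + 1 + j y * (T + 1))"
    by (rule sum.cong) (auto simp: G_def R_def)
  also have "\<dots> = (\<Sum>m\<in>{0..<p}. n + 1 + m * (T + 1))"
    by (rule sum.reindex_bij_betw[OF j])
  also have "\<dots> = (\<Sum>m\<in>{0..<p}. n + 1) + (\<Sum>m\<in>{0..<p}. m) * (T + 1)"
    unfolding sum.distrib sum_distrib_right ..
  also have "\<dots> = p * (n + 1) + (T + 1) * (p * (p - 1) div 2)"
    using Sum_Ico_nat[of 0 p] by simp
  finally have "sum G UNIV = p * (n + 1) + (T + 1) * (p * (p - 1) div 2)"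
    by simp
  moreover have "p * (p - 1) = (CARD('a) - 2) * (CARD('a) - 3)"
    unfolding p_def by (simp add: diff_diff_add)
  ultimately have "N = n + sum G UNIV"
    unfolding N p_def by simp
  then obtain g where "\<And>y. card {i\<in>{n..<N}. g i = y} = G y"
    using exists_tail_with_counts[of n G] by auto
  then show ?thesis
    using that[of j g] j unfolding bij_betw_def R_def G_def by simp
qed

lemma dim_span_insert:
  fixes S :: "(nat \<Rightarrow> 'a::field) set"
  assumes "V.subspace S" "finite S" "u \<notin> S"
  shows "V.dim (V.span (insert u S)) = V.dim S + 1"
proof -
  obtain B where B: "B \<subseteq> S" "V.independent B" "S \<subseteq> V.span B" "card B = V.dim S"
    using V.basis_exists by blast
  have "V.span B = S"
    using B V.span_minimal[OF B(1) assms(1)] by blast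
  then have "V.span (insert u B) = V.span (insert u S)"
    unfolding V.span_eq using B(1)
    by (auto intro: V.span_base V.span_mono[of B "insert u B", THEN subsetD])
  moreover have "V.independent (insert u B)"
    using B(2) assms(3) \<open>V.span B = S\<close> by (simp add: V.independent_insert)
  moreover have "finite B" "u \<notin> B"
    using B(1) assms(2,3) finite_subset by blast+
  ultimately show ?thesis
    using B(1,4) assms(3) V.dim_span_eq_card_independent[of "insert u B"] by auto
qed

context
  fixes C :: "(nat \<Rightarrow> 'a::{finite,field}) set" and n k N :: nat and b :: 'a and g :: "nat \<Rightarrow> 'a"
  assumes code: "lin_code n k C" and b_nonzero: "b \<noteq> 0"
    and long: "2 * n + 1 \<le> N" and tail_nonzero: "\<And>i. n \<le> i \<Longrightarrow> i < N \<Longrightarrow> g i \<noteq> 0"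
begin

definition ext_vec :: "nat \<Rightarrow> 'a" where
  "ext_vec = (\<lambda>i. if i < n then - b else if i < N then g i else 0)"

definition ext_code :: "(nat \<Rightarrow> 'a) set" where
  "ext_code = V.span (insert ext_vec C)"

lemma code_vanishes: "c \<in> C \<Longrightarrow> n \<le> i \<Longrightarrow> c i = 0"
  using code by (auto simp: lin_code_def vecs_def)

lemma span_code: "V.span C = C"
  using code by (simp add: lin_code_def)

lemma ext_vec_notin_code: "ext_vec \<notin> C"
  using code_vanishes[of ext_vec n] tail_nonzero[of n] long by (auto simp: ext_vec_def)

lemma code_subset_ext_code: "C \<subseteq> ext_code"
  unfolding ext_code_def by (auto intro: V.span_base)

lemma ext_code_memI: "c \<in> C \<Longrightarrow> c + vsc l ext_vec \<in> ext_code"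
  unfolding ext_code_def by (intro V.span_add V.span_scale V.span_base) auto

lemma ext_code_cases:
  assumes "v \<in> ext_code"
  obtains c l where "c \<in> C" "v = c + vsc l ext_vec"
proof -
  obtain l where "v - vsc l ext_vec \<in> V.span C"
    using assms V.span_insert unfolding ext_code_def by blast
  then show ?thesis
    using that[of "v - vsc l ext_vec" l] span_code by simp
qed

lemma cnt_code:
  assumes "c \<in> C"
  shows "cnt N c x = cnt n c x + (if x = 0 then N - n else 0)"
proof -
  have "{i\<in>{n..<N}. c i = x} = (if x = 0 then {n..<N} else {})"
    using code_vanishes[OF assms] by auto
  then show ?thesis
    using cnt_split[of n N c x] long by simp
qed

lemma hw_code: "c \<in> C \<Longrightarrow> hw N c = hw n c"
  using cnt_code[of c 0] cnt_le[of n c 0] long by (simp add: hw_eq_diff_cnt_zero)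

lemma cnt_ext_scaled:
  assumes "c \<in> C" "l \<noteq> 0"
  shows "cnt N (c + vsc l ext_vec) (l * y)
       = cnt n (vsc (inverse l) c) (y + b) + card {i\<in>{n..<N}. g i = y}"
proof -
  have "{i\<in>{..<n}. (c + vsc l ext_vec) i = l * y} = {i\<in>{..<n}. vsc (inverse l) c i = y + b}"
    using assms(2) by (auto simp: ext_vec_def vsc_apply field_simps)
  moreover have "{i\<in>{n..<N}. (c + vsc l ext_vec) i = l * y} = {i\<in>{n..<N}. g i = y}"
    using assms code_vanishes[of c] by (auto simp: ext_vec_def vsc_apply)
  ultimately show ?thesis
    using cnt_split[of n N "c + vsc l ext_vec" "l * y"] long unfolding cnt_def by simp
qed

lemma hw_ext:
  assumes "c \<in> C" "l \<noteq> 0"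
  shows "hw N (c + vsc l ext_vec) = N - cnt n (vsc (inverse l) c) b"
proof -
  have "{i\<in>{n..<N}. g i = 0} = {}"
    using tail_nonzero by auto
  then show ?thesis
    using cnt_ext_scaled[OF assms, of 0]
    by (simp only: hw_eq_diff_cnt_zero mult_zero_right card.empty add_0_right add_0_left)
qed

lemma lin_code_ext_code: "lin_code N (k + 1) ext_code"
  unfolding lin_code_def
proof (intro conjI impI allI)
  have "insert ext_vec C \<subseteq> vecs N"
    using code long by (auto simp: lin_code_def vecs_def ext_vec_def)
  then show "ext_code \<subseteq> vecs N"
    unfolding ext_code_def using V.span_minimal subspace_vecs by blast
  show "V.subspace ext_code"
    unfolding ext_code_def by (rule V.subspace_span)
  have "V.subspace C" "V.dim C = k"
    using code by (auto simp: lin_code_def)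
  then show "V.dim ext_code = k + 1"
    unfolding ext_code_def
    using dim_span_insert[OF _ lin_code_card(1)[OF code] ext_vec_notin_code] by simp
  show "\<exists>c\<in>ext_code. c i \<noteq> 0" if "i < N" for i
  proof
    show "ext_vec i \<noteq> 0"
      using that b_nonzero tail_nonzero[of i] by (auto simp: ext_vec_def)
    show "ext_vec \<in> ext_code"
      unfolding ext_code_def by (rule V.span_base) simp
  qed
qed

lemma hw_ext_code_image:
  "hw N ` (ext_code - {0}) = hw n ` (C - {0}) \<union> (\<lambda>c. N - cnt n c b) ` C"
proof (intro set_eqI iffI)
  fix w assume "w \<in> hw N ` (ext_code - {0})"
  then obtain v where v: "v \<in> ext_code" "v \<noteq> 0" "w = hw N v" by blast
  then obtain c l where cl: "c \<in> C" "v = c + vsc l ext_vec"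
    using ext_code_cases by blast
  show "w \<in> hw n ` (C - {0}) \<union> (\<lambda>c. N - cnt n c b) ` C"
  proof (cases "l = 0")
    case True
    then show ?thesis using v cl hw_code by auto
  next
    case False
    have "vsc (inverse l) c \<in> C"
      using code cl(1) V.subspace_scale by (auto simp: lin_code_def)
    then show ?thesis using v cl hw_ext[OF cl(1) False] by auto
  qed
next
  fix w assume "w \<in> hw n ` (C - {0}) \<union> (\<lambda>c. N - cnt n c b) ` C"
  then consider c where "c \<in> C" "c \<noteq> 0" "w = hw n c" | c where "c \<in> C" "w = N - cnt n c b"
    by blast
  then show "w \<in> hw N ` (ext_code - {0})"
  proof cases
    case 1
    then show ?thesis using code_subset_ext_code hw_code by force
  next
    case 2
    have hw: "hw N (c + vsc 1 ext_vec) = w"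
      using hw_ext[OF 2(1), of 1] 2(2) by simp
    have "0 < w"
      using 2(2) cnt_le[of n c b] long by simp
    moreover have "hw N (0 :: nat \<Rightarrow> 'a) = 0"
      by (simp add: hw_def)
    ultimately have "c + vsc 1 ext_vec \<noteq> 0"
      using hw by auto
    with hw show ?thesis
      using ext_code_memI[OF 2(1)] by blast
  qed
qed

lemma MWS_ext_code:
  assumes mws: "MWS n k C"
    and injb: "\<And>x y. x \<in> C \<Longrightarrow> y \<in> C \<Longrightarrow> cnt n x b = cnt n y b \<Longrightarrow> x = y"
  shows "MWS N (k + 1) ext_code"
proof -
  let ?new = "\<lambda>c. N - cnt n c b"
  have "hw n c \<noteq> ?new d" for c d :: "nat \<Rightarrow> 'a"
    using cnt_le[of n d b] hw_eq_diff_cnt_zero[of n c] long by linarith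
  then have disjoint: "hw n ` (C - {0}) \<inter> ?new ` C = {}" by blast
  have "inj_on ?new C"
  proof (rule inj_onI)
    fix x y assume "x \<in> C" "y \<in> C" "?new x = ?new y"
    moreover have "cnt n x b \<le> N" "cnt n y b \<le> N"
      using cnt_le[of n x b] cnt_le[of n y b] long by auto
    ultimately show "x = y" using injb by (metis diff_diff_cancel)
  qed
  then have "card (hw N ` (ext_code - {0})) = card (hw n ` (C - {0})) + CARD('a) ^ k"
    unfolding hw_ext_code_image using lin_code_card[OF code] disjoint
    by (simp add: card_Un_disjoint card_image)
  also have "\<dots> = (CARD('a) ^ (k + 1) - 1) div (CARD('a) - 1)"
    using mws geometric_div_add_power[OF two_le_CARD_field, of k]
    by (simp add: MWS_def)
  finally show ?thesis unfolding MWS_def .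
qed

lemma inj_cnt_code:
  assumes "c \<in> C" "inj (cnt n c)"
  shows "inj (cnt N c)"
proof -
  have "cnt n c x < N - n" for x
    using cnt_le[of n c x] long by simp
  moreover have "cnt N c = (\<lambda>x. cnt n c x + (if x = 0 then N - n else 0))"
    using cnt_code[OF assms(1)] by (simp add: fun_eq_iff)
  ultimately show ?thesis
    using inj_add_at_zero[OF assms(2)] by simp
qed

context
  fixes T :: nat and j :: "'a \<Rightarrow> nat"
  assumes pB: "propB n C" and length_pos: "1 \<le> n"
    and T: "\<And>c z. c \<in> C \<Longrightarrow> z \<noteq> 0 \<Longrightarrow> cnt n c z \<le> T"
    and tail: "\<And>y. card {i\<in>{n..<N}. g i = y} = (if y = 0 \<or> y = - b then 0 else n + 1 + j y * (T + 1))"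
    and j: "inj_on j (UNIV - {0, - b})"
begin

lemma inj_cnt_ext:
  assumes c: "c \<in> C" and l: "l \<noteq> 0"
  shows "inj (cnt N (c + vsc l ext_vec))"
proof -
  define c' where "c' = vsc (inverse l) c"
  have "c' \<in> C"
    unfolding c'_def using code c V.subspace_scale by (auto simp: lin_code_def)
  have count_b_0: "cnt n c' b \<noteq> cnt n c' 0"
  proof (cases "c' = 0")
    case True
    then show ?thesis using length_pos b_nonzero by (simp add: cnt_zero_vec)
  next
    case False
    then show ?thesis using pB \<open>c' \<in> C\<close> b_nonzero by (auto simp: propB_def inj_eq)
  qed
  have "inj (\<lambda>y. cnt n c' (y + b) + (if y = 0 \<or> y = - b then 0 else n + 1 + j y * (T + 1)))"
    by (rule inj_shifted_plus_blocks[of b "cnt n c'" n T j,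
          OF b_nonzero cnt_le T[OF \<open>c' \<in> C\<close>] count_b_0 j])
  moreover have "cnt N (c + vsc l ext_vec) (l * y)
      = cnt n c' (y + b) + (if y = 0 \<or> y = - b then 0 else n + 1 + j y * (T + 1))" for y
    using cnt_ext_scaled[OF c l] tail unfolding c'_def by simp
  ultimately have "inj (\<lambda>y. cnt N (c + vsc l ext_vec) (l * y))"
    by simp
  moreover have "inj (\<lambda>x::'a. x / l)"
    using l by (simp add: inj_def)
  ultimately have "inj ((\<lambda>y. cnt N (c + vsc l ext_vec) (l * y)) \<circ> (\<lambda>x. x / l))"
    by (rule inj_compose)
  moreover have "(\<lambda>y. cnt N (c + vsc l ext_vec) (l * y)) \<circ> (\<lambda>x. x / l) = cnt N (c + vsc l ext_vec)"
    using l by (simp add: fun_eq_iff)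
  ultimately show ?thesis
    by simp
qed

lemma propB_ext_code: "propB N ext_code"
  unfolding propB_def
proof
  fix v assume "v \<in> ext_code - {0}"
  then obtain c l where c: "c \<in> C" and v: "v = c + vsc l ext_vec" "v \<noteq> 0"
    using ext_code_cases by blast
  show "inj (cnt N v)"
  proof (cases "l = 0")
    case True
    then have "c \<noteq> 0" "v = c" using v by auto
    then show ?thesis
      using inj_cnt_code[OF c] pB c by (simp add: propB_def)
  next
    case False
    then show ?thesis
      using inj_cnt_ext[OF c] v(1) by simp
  qed
qed

end
end

lemma MWS_extension:
  fixes C :: "(nat \<Rightarrow> 'a::{finite,field}) set"
  assumes "lin_code n k C" "MWS n k C" "propA n C"
  shows "\<exists>D :: (nat \<Rightarrow> 'a) set. lin_code (2 * n + 1) (k + 1) D \<and> MWS (2 * n + 1) (k + 1) D"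
proof -
  obtain b :: 'a where b: "b \<noteq> 0" "\<And>x y. x \<in> C \<Longrightarrow> y \<in> C \<Longrightarrow> cnt n x b = cnt n y b \<Longrightarrow> x = y"
    using assms(3) unfolding propA_def by blast
  have "lin_code (2 * n + 1) (k + 1) (ext_code C n (2 * n + 1) b (\<lambda>_. 1))"
    by (rule lin_code_ext_code[OF assms(1) b(1)]) auto
  moreover have "MWS (2 * n + 1) (k + 1) (ext_code C n (2 * n + 1) b (\<lambda>_. 1))"
    by (rule MWS_ext_code[OF assms(1) b(1) _ _ assms(2) b(2)]) auto
  ultimately show ?thesis by blast
qed

lemma cnt_le_maxT:
  fixes C :: "(nat \<Rightarrow> 'a::{finite,field}) set"
  assumes "c \<in> C" "z \<noteq> 0"
  shows "cnt n c z \<le> maxT n C"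
proof (cases "c = 0")
  case False
  have "{cnt n c b | c b. c \<in> C - {0} \<and> b \<noteq> 0} \<subseteq> {..n}"
    by (auto simp: cnt_le)
  then have "finite {cnt n c b | c b. c \<in> C - {0} \<and> b \<noteq> 0}"
    using finite_subset by blast
  moreover have "cnt n c z \<in> {cnt n c b | c b. c \<in> C - {0} \<and> b \<noteq> 0}"
    using assms False by blast
  ultimately show ?thesis
    unfolding maxT_def by (rule Max_ge)
qed (simp add: cnt_zero_vec assms)

lemma MWS_propB_extension:
  fixes C :: "(nat \<Rightarrow> 'a::{finite,field}) set"
  assumes code: "lin_code n k C" and "MWS n k C" "propA n C" "propB n C" "1 \<le> k" "3 \<le> CARD('a)"
  defines "N \<equiv> (CARD('a) - 1) * n + (CARD('a) - 2) + (maxT n C + 1) * ((CARD('a) - 2) * (CARD('a) - 3) div 2)"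
  shows "\<exists>D :: (nat \<Rightarrow> 'a) set. lin_code N (k + 1) D \<and> MWS N (k + 1) D \<and> propB N D"
proof -
  obtain b :: 'a where b: "b \<noteq> 0" "\<And>x y. x \<in> C \<Longrightarrow> y \<in> C \<Longrightarrow> cnt n x b = cnt n y b \<Longrightarrow> x = y"
    using assms(3) unfolding propA_def by blast
  define p where "p = CARD('a) - 3"
  have p: "CARD('a) = p + 3"
    using assms(6) p_def by simp
  have N: "N = n + (CARD('a) - 2) * (n + 1) + (maxT n C + 1) * ((CARD('a) - 2) * (CARD('a) - 3) div 2)"
    unfolding N_def p by (simp add: algebra_simps)
  obtain j g where j: "inj_on j (UNIV - {0, - b})"
    and tail: "\<And>y. card {i\<in>{n..<N}. g i = y} = (if y = 0 \<or> y = - b then 0 else n + 1 + j y * (maxT n C + 1))"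
    using exists_block_tail[OF b(1) N] by blast
  have tail_nonzero: "g i \<noteq> 0" if "n \<le> i" "i < N" for i
    using tail[of 0] that by (auto simp: card_eq_0_iff)
  have long: "2 * n + 1 \<le> N"
    unfolding N p by (simp add: algebra_simps)
  show ?thesis
  proof (intro exI conjI)
    show "lin_code N (k + 1) (ext_code C n N b g)"
      by (rule lin_code_ext_code[OF code b(1) long tail_nonzero])
    show "MWS N (k + 1) (ext_code C n N b g)"
      by (rule MWS_ext_code[OF code b(1) long tail_nonzero assms(2) b(2)])
    show "propB N (ext_code C n N b g)"
      by (rule propB_ext_code[OF code b(1) long tail_nonzero assms(4)
            lin_code_length_pos[OF code assms(5)] cnt_le_maxT tail j])
  qed
qed

theorem mainTheorem3:
  fixes C :: "(nat \<Rightarrow> 'a::{finite,field}) set"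
  assumes "lin_code n k C" and "MWS n k C"
  shows "(propA n C \<longrightarrow>
            (\<exists>D :: (nat \<Rightarrow> 'a) set. lin_code (2*n+1) (k+1) D \<and> MWS (2*n+1) (k+1) D))
       \<and> (CARD('a) \<ge> 3 \<and> k \<ge> 1 \<and> propA n C \<and> propB n C \<longrightarrow>
            (\<exists>D :: (nat \<Rightarrow> 'a) set. lin_code ((CARD('a)-1)*n + (CARD('a)-2) + (maxT n C + 1) * ((CARD('a)-2)*(CARD('a)-3) div 2)) (k+1) D
               \<and> MWS ((CARD('a)-1)*n + (CARD('a)-2) + (maxT n C + 1) * ((CARD('a)-2)*(CARD('a)-3) div 2)) (k+1) D
               \<and> propB ((CARD('a)-1)*n + (CARD('a)-2) + (maxT n C + 1) * ((CARD('a)-2)*(CARD('a)-3) div 2)) D))"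
  using MWS_extension[OF assms] MWS_propB_extension[OF assms] by blast

end
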